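(* Let $R$ be a monad on $\mathrm{Sets}$ and $LM$ a left $R$-module with values in $\mathrm{Sets}$. The pre-category $CC(R,LM)$, equipped with the length function, the object $pt$, the map $ft$, the morphisms $p_X$, and the objects $f^*X$ and morphisms $q(f,X)$ described below, is a C-system.
   Context: Notation: $[n]=\{1,\dots,n\}$, $[0]=\emptyset$. A monad $R$ on Sets is given by sets $R(X)$, maps $\eta_X:X\to R(X)$ and, for $f:X\to R(Y)$, maps $\mathrm{bind}(f):R(X)\to R(Y)$ with $\mathrm{bind}(\eta_X)=\mathrm{id}$, $\mathrm{bind}(f)\circ\eta_X=f$, $\mathrm{bind}(\mathrm{bind}(g)\circ f)=\mathrm{bind}(g)\circ\mathrm{bind}(f)$. A left $R$-module $LM$ with values in Sets is a functor $LM:\mathrm{Sets}\to\mathrm{Sets}$ with maps $\rho(f):LM(X)\to LM(Y)$ for $f:X\to R(Y)$ such that $\rho(\eta_X)=\mathrm{id}$ and $\rho(g)\circ\rho(f)=\rho(\mathrm{bind}(g)\circ f)$. Elements $y$ of a set $Y$ are regarded as elements of $R(Y)$ via $\eta_Y$. For $E\in LM([m])$ (resp. $E\in R([m])$) and $f_1,\dots,f_m\in R(Y)$ write $E(f_1/1,\dots,f_m/m)$ for $\rho(f)(E)$ (resp. $\mathrm{bind}(f)(E)$), where $f(i)=f_i$. The pre-category $CC(R,LM)$: its set of objects is $\coprod_{n\ge0}Ob_n$ with $Ob_n=LM([0])\times LM([1])\times\dots\times LM([n-1])$; we write objects as sequences $(T_1,\dots,T_n)$ with $T_i\in LM([i-1])$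 and set $l(T_1,\dots,T_n)=n$. The set of morphisms from $(E_1,\dots,E_m)$ to $(T_1,\dots,T_n)$ is $R([m])^n$ (morphism sets for different pairs of objects are disjoint). The composite of $f=(f_1,\dots,f_n):(E_1,\dots,E_m)\to(T_1,\dots,T_n)$ and $g=(g_1,\dots,g_k):(T_1,\dots,T_n)\to(U_1,\dots,U_k)$ is $g\circ f=(g_1(f_1/1,\dots,f_n/n),\dots,g_k(f_1/1,\dots,f_n/n))$; the identity of an object of length $n$ is $(1,\dots,n)$. Structure: $pt$ is the empty sequence; $ft(T_1,\dots,T_n)=(T_1,\dots,T_{n-1})$ for $n\ge1$, $ft(pt)=pt$; $p_X=(1,\dots,n):(T_1,\dots,T_{n+1})\to(T_1,\dots,T_n)$ for $X=(T_1,\dots,T_{n+1})$ and $p_{pt}=\mathrm{id}$; for $X=(T_1,\dots,T_{n+1})$ and $f=(f_1,\dots,f_n):(R_1,\dots,R_m)\to(T_1,\dots,T_n)$, $f^*X=(R_1,\dots,R_m,T_{n+1}(f_1/1,\dots,f_n/n))$ and $q(f,X)=(f_1,\dots,f_n,m+1):f^*X\to X$. A C-system is a category $CC$ together with a function $l:Ob(CC)\to\mathbb{N}$, an object $pt$, a map $ft:Ob(CC)\to Ob(CC)$, morphisms $p_X:X\to ft(X)$ for all $X$, and, for every $X$ with $l(X)>0$ and every morphism $f:Y\to ft(X)$, an object $f^*X$ and a morphism $q(f,X):f^*X\to X$, such that: $l^{-1}(0)=\{pt\}$; $l(ft(X))=l(X)-1$ if $l(X)>0$ and $ft(pt)=pt$;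 $pt$ is a final object; $l(f^*X)>0$, $ft(f^*X)=Y$, and $p_X\circ q(f,X)=f\circ p_{f^*X}$ with this commutative square a pullback square; $\mathrm{id}_{ft(X)}^*X=X$ and $q(\mathrm{id}_{ft(X)},X)=\mathrm{id}_X$; and for $g:Z\to Y$, $f:Y\to ft(X)$: $(f\circ g)^*X=g^*(f^*X)$ and $q(f\circ g,X)=q(f,X)\circ q(g,f^*X)$. *)

theory Defs
  imports Main
begin

text \<open>Sets are modelled as subsets of a fixed universe (here: sets of natural numbers),
  which contains all the finite ordinals [n] = {1..n}.  A monad on Sets is given in
  Kleisli form: R X, eta X :: X \<rightarrow> R X, bind X Y f :: R X \<rightarrow> R Y for f : X \<rightarrow> R Y.
  Functions are total HOL functions; only their values on the domain set matter
  (congruence conditions).\<close>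

definition monad_sets ::
  "(nat set \<Rightarrow> 'r set) \<Rightarrow> (nat set \<Rightarrow> nat \<Rightarrow> 'r) \<Rightarrow>
   (nat set \<Rightarrow> nat set \<Rightarrow> (nat \<Rightarrow> 'r) \<Rightarrow> 'r \<Rightarrow> 'r) \<Rightarrow> bool" where
  "monad_sets R eta bind \<longleftrightarrow>
     (\<forall>X. \<forall>x\<in>X. eta X x \<in> R X) \<and>
     (\<forall>X Y f. (\<forall>x\<in>X. f x \<in> R Y) \<longrightarrow> (\<forall>t\<in>R X. bind X Y f t \<in> R Y)) \<and>
     (\<forall>X Y f g. (\<forall>x\<in>X. f x = g x) \<longrightarrow> (\<forall>t\<in>R X. bind X Y f t = bind X Y g t)) \<and>
     (\<forall>X. \<forall>t\<in>R X. bind X X (eta X) t = t) \<and>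
     (\<forall>X Y f. (\<forall>x\<in>X. f x \<in> R Y) \<longrightarrow> (\<forall>x\<in>X. bind X Y f (eta X x) = f x)) \<and>
     (\<forall>X Y Z f g. (\<forall>x\<in>X. f x \<in> R Y) \<longrightarrow> (\<forall>y\<in>Y. g y \<in> R Z) \<longrightarrow>
        (\<forall>t\<in>R X. bind X Z (\<lambda>x. bind Y Z g (f x)) t = bind Y Z g (bind X Y f t)))"

definition left_module_sets ::
  "(nat set \<Rightarrow> 'r set) \<Rightarrow> (nat set \<Rightarrow> nat \<Rightarrow> 'r) \<Rightarrow>
   (nat set \<Rightarrow> nat set \<Rightarrow> (nat \<Rightarrow> 'r) \<Rightarrow> 'r \<Rightarrow> 'r) \<Rightarrow>
   (nat set \<Rightarrow> 'm set) \<Rightarrow> (nat set \<Rightarrow> nat set \<Rightarrow> (nat \<Rightarrow> nat) \<Rightarrow> 'm \<Rightarrow> 'm) \<Rightarrow>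
   (nat set \<Rightarrow> nat set \<Rightarrow> (nat \<Rightarrow> 'r) \<Rightarrow> 'm \<Rightarrow> 'm) \<Rightarrow> bool" where
  "left_module_sets R eta bind LM lmap rho \<longleftrightarrow>
     \<comment> \<open>LM is a functor Sets \<rightarrow> Sets\<close>
     (\<forall>X Y f. (\<forall>x\<in>X. f x \<in> Y) \<longrightarrow> (\<forall>a\<in>LM X. lmap X Y f a \<in> LM Y)) \<and>
     (\<forall>X Y f g. (\<forall>x\<in>X. f x = g x) \<longrightarrow> (\<forall>a\<in>LM X. lmap X Y f a = lmap X Y g a)) \<and>
     (\<forall>X. \<forall>a\<in>LM X. lmap X X id a = a) \<and>
     (\<forall>X Y Z f g. (\<forall>x\<in>X. f x \<in> Y) \<longrightarrow> (\<forall>y\<in>Y. g y \<in> Z) \<longrightarrow>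
        (\<forall>a\<in>LM X. lmap Y Z g (lmap X Y f a) = lmap X Z (g \<circ> f) a)) \<and>
     \<comment> \<open>module structure\<close>
     (\<forall>X Y f. (\<forall>x\<in>X. f x \<in> R Y) \<longrightarrow> (\<forall>a\<in>LM X. rho X Y f a \<in> LM Y)) \<and>
     (\<forall>X Y f g. (\<forall>x\<in>X. f x = g x) \<longrightarrow> (\<forall>a\<in>LM X. rho X Y f a = rho X Y g a)) \<and>
     (\<forall>X. \<forall>a\<in>LM X. rho X X (eta X) a = a) \<and>
     (\<forall>X Y Z f g. (\<forall>x\<in>X. f x \<in> R Y) \<longrightarrow> (\<forall>y\<in>Y. g y \<in> R Z) \<longrightarrow>
        (\<forall>a\<in>LM X. rho Y Z g (rho X Y f a) = rho X Z (\<lambda>x. bind Y Z g (f x)) a))"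

definition is_category ::
  "'o set \<Rightarrow> ('o \<Rightarrow> 'o \<Rightarrow> 'h set) \<Rightarrow> ('h \<Rightarrow> 'h \<Rightarrow> 'h) \<Rightarrow> ('o \<Rightarrow> 'h) \<Rightarrow> bool" where
  "is_category Ob Hom cmp idt \<longleftrightarrow>
     (\<forall>X\<in>Ob. \<forall>Y\<in>Ob. \<forall>X'\<in>Ob. \<forall>Y'\<in>Ob. Hom X Y \<inter> Hom X' Y' \<noteq> {} \<longrightarrow> X = X' \<and> Y = Y') \<and>
     (\<forall>X\<in>Ob. idt X \<in> Hom X X) \<and>
     (\<forall>X\<in>Ob. \<forall>Y\<in>Ob. \<forall>Z\<in>Ob. \<forall>f\<in>Hom X Y. \<forall>g\<in>Hom Y Z. cmp g f \<in> Hom X Z) \<and>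
     (\<forall>X\<in>Ob. \<forall>Y\<in>Ob. \<forall>f\<in>Hom X Y. cmp f (idt X) = f \<and> cmp (idt Y) f = f) \<and>
     (\<forall>W\<in>Ob. \<forall>X\<in>Ob. \<forall>Y\<in>Ob. \<forall>Z\<in>Ob. \<forall>f\<in>Hom W X. \<forall>g\<in>Hom X Y. \<forall>h\<in>Hom Y Z.
        cmp h (cmp g f) = cmp (cmp h g) f)"

definition is_pullback ::
  "'o set \<Rightarrow> ('o \<Rightarrow> 'o \<Rightarrow> 'h set) \<Rightarrow> ('h \<Rightarrow> 'h \<Rightarrow> 'h) \<Rightarrow>
   'o \<Rightarrow> 'o \<Rightarrow> 'o \<Rightarrow> 'o \<Rightarrow> 'h \<Rightarrow> 'h \<Rightarrow> 'h \<Rightarrow> 'h \<Rightarrow> bool" where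
  \<comment> \<open>the commutative square  P --a--> X, P --b--> Y, X --c--> B, Y --d--> B  (c \<circ> a = d \<circ> b)
      is a pullback square\<close>
  "is_pullback Ob Hom cmp P X Y B a b c d \<longleftrightarrow>
     (\<forall>W\<in>Ob. \<forall>u\<in>Hom W Y. \<forall>v\<in>Hom W X. cmp d u = cmp c v \<longrightarrow>
        (\<exists>!w. w \<in> Hom W P \<and> cmp b w = u \<and> cmp a w = v))"

definition C_system ::
  "'o set \<Rightarrow> ('o \<Rightarrow> 'o \<Rightarrow> 'h set) \<Rightarrow> ('h \<Rightarrow> 'h \<Rightarrow> 'h) \<Rightarrow> ('o \<Rightarrow> 'h) \<Rightarrow>
   ('o \<Rightarrow> nat) \<Rightarrow> 'o \<Rightarrow> ('o \<Rightarrow> 'o) \<Rightarrow> ('o \<Rightarrow> 'h) \<Rightarrow>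
   ('h \<Rightarrow> 'o \<Rightarrow> 'o) \<Rightarrow> ('h \<Rightarrow> 'o \<Rightarrow> 'h) \<Rightarrow> bool" where
  "C_system Ob Hom cmp idt l pt ft p fstar q \<longleftrightarrow>
     is_category Ob Hom cmp idt \<and>
     pt \<in> Ob \<and>
     (\<forall>X\<in>Ob. l X = 0 \<longleftrightarrow> X = pt) \<and>
     (\<forall>X\<in>Ob. ft X \<in> Ob) \<and>
     (\<forall>X\<in>Ob. 0 < l X \<longrightarrow> l (ft X) = l X - 1) \<and>
     ft pt = pt \<and>
     (\<forall>X\<in>Ob. \<exists>!f. f \<in> Hom X pt) \<and>
     (\<forall>X\<in>Ob. p X \<in> Hom X (ft X)) \<and>
     (\<forall>X\<in>Ob. \<forall>Y\<in>Ob. \<forall>f\<in>Hom Y (ft X). 0 < l X \<longrightarrow>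
        fstar f X \<in> Ob \<and> 0 < l (fstar f X) \<and> ft (fstar f X) = Y \<and>
        q f X \<in> Hom (fstar f X) X \<and>
        cmp (p X) (q f X) = cmp f (p (fstar f X)) \<and>
        is_pullback Ob Hom cmp (fstar f X) X Y (ft X) (q f X) (p (fstar f X)) (p X) f) \<and>
     (\<forall>X\<in>Ob. 0 < l X \<longrightarrow> fstar (idt (ft X)) X = X \<and> q (idt (ft X)) X = idt X) \<and>
     (\<forall>X\<in>Ob. \<forall>Y\<in>Ob. \<forall>Z\<in>Ob. \<forall>f\<in>Hom Y (ft X). \<forall>g\<in>Hom Z Y. 0 < l X \<longrightarrow>
        fstar (cmp f g) X = fstar g (fstar f X) \<and>
        q (cmp f g) X = cmp (q f X) (q g (fstar f X)))"

text \<open>Objects are lists [T_1,...,T_n] with T_i \<in> LM [i-1] (0-based: xs!i \<in> LM [i]).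
  A morphism (E_1..E_m) \<rightarrow> (T_1..T_n) is a triple (source, target, [f_1..f_n]) with
  f_j \<in> R [m]; carrying source and target makes hom-sets disjoint.\<close>

abbreviation ordn :: "nat \<Rightarrow> nat set" where "ordn n \<equiv> {1..n}"

definition CC_Ob :: "(nat set \<Rightarrow> 'm set) \<Rightarrow> 'm list set" where
  "CC_Ob LM = {xs. \<forall>i<length xs. xs ! i \<in> LM (ordn i)}"

definition CC_Hom :: "(nat set \<Rightarrow> 'r set) \<Rightarrow> (nat set \<Rightarrow> 'm set) \<Rightarrow>
    'm list \<Rightarrow> 'm list \<Rightarrow> ('m list \<times> 'm list \<times> 'r list) set" where
  "CC_Hom R LM X Y = (if X \<in> CC_Ob LM \<and> Y \<in> CC_Ob LM then
     {(X, Y, fs) | fs. length fs = length Y \<and> (\<forall>f\<in>set fs. f \<in> R (ordn (length X)))} else {})"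

definition subst_fun :: "'r list \<Rightarrow> nat \<Rightarrow> 'r" where
  "subst_fun fs i = fs ! (i - 1)"

definition CC_comp :: "(nat set \<Rightarrow> nat set \<Rightarrow> (nat \<Rightarrow> 'r) \<Rightarrow> 'r \<Rightarrow> 'r) \<Rightarrow>
    ('m list \<times> 'm list \<times> 'r list) \<Rightarrow> ('m list \<times> 'm list \<times> 'r list) \<Rightarrow>
    ('m list \<times> 'm list \<times> 'r list)" where
  "CC_comp bind g f = (case f of (X, Y, fs) \<Rightarrow> case g of (_, Z, gs) \<Rightarrow>
     (X, Z, map (bind (ordn (length Y)) (ordn (length X)) (subst_fun fs)) gs))"

definition CC_id :: "(nat set \<Rightarrow> nat \<Rightarrow> 'r) \<Rightarrow> 'm list \<Rightarrow> ('m list \<times> 'm list \<times> 'r list)" where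
  "CC_id eta X = (X, X, map (eta (ordn (length X))) [1..<length X + 1])"

definition CC_ft :: "'m list \<Rightarrow> 'm list" where
  "CC_ft X = butlast X"

definition CC_p :: "(nat set \<Rightarrow> nat \<Rightarrow> 'r) \<Rightarrow> 'm list \<Rightarrow> ('m list \<times> 'm list \<times> 'r list)" where
  "CC_p eta X = (X, butlast X, map (eta (ordn (length X))) [1..<length X])"

text \<open>f^*X = (R_1,...,R_m, T_{n+1}(f_1/1,...,f_n/n))\<close>
definition CC_star :: "(nat set \<Rightarrow> nat set \<Rightarrow> (nat \<Rightarrow> 'r) \<Rightarrow> 'm \<Rightarrow> 'm) \<Rightarrow>
    ('m list \<times> 'm list \<times> 'r list) \<Rightarrow> 'm list \<Rightarrow> 'm list" where
  "CC_star rho f X = (case f of (D, C, fs) \<Rightarrow>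
     D @ [rho (ordn (length C)) (ordn (length D)) (subst_fun fs) (last X)])"

text \<open>q(f,X) = (f_1,...,f_n, m+1) : f^*X \<rightarrow> X, where f_i \<in> R [m] is regarded as an element
  of R [m+1] via R applied to the inclusion [m] \<subseteq> [m+1].\<close>
definition CC_q :: "(nat set \<Rightarrow> nat \<Rightarrow> 'r) \<Rightarrow> (nat set \<Rightarrow> nat set \<Rightarrow> (nat \<Rightarrow> 'r) \<Rightarrow> 'r \<Rightarrow> 'r) \<Rightarrow>
    (nat set \<Rightarrow> nat set \<Rightarrow> (nat \<Rightarrow> 'r) \<Rightarrow> 'm \<Rightarrow> 'm) \<Rightarrow>
    ('m list \<times> 'm list \<times> 'r list) \<Rightarrow> 'm list \<Rightarrow> ('m list \<times> 'm list \<times> 'r list)" where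
  "CC_q eta bind rho f X = (case f of (D, C, fs) \<Rightarrow>
     (CC_star rho f X, X,
      map (bind (ordn (length D)) (ordn (length D + 1)) (eta (ordn (length D + 1)))) fs
        @ [eta (ordn (length D + 1)) (length D + 1)]))"

end

theory Submission
  imports Defs
begin

text \<open>A morphism (E_1..E_m) \<rightarrow> (T_1..T_n) is a substitution of terms f_i \<in> R[m] for the
  variables 1..n, and composition is simultaneous substitution, so the category laws are the
  Kleisli laws of R.  The square formed by q(f,X) and the projections is a pullback because a
  morphism W \<rightarrow> f^*X is a list of m+1 terms: its first m entries are the morphism to
  (R_1..R_m), its last one is the last entry of the morphism to X, and compatibility with f
  says that the other entries of the latter are determined by the former.  The functoriality
  of f \<mapsto> f^*X is the module law of rho.\<close>

locale set_monad =
  fixes R :: "nat set \<Rightarrow> 'r set" and eta :: "nat set \<Rightarrow> nat \<Rightarrow> 'r"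
    and bind :: "nat set \<Rightarrow> nat set \<Rightarrow> (nat \<Rightarrow> 'r) \<Rightarrow> 'r \<Rightarrow> 'r"
  assumes eta_in: "x \<in> X \<Longrightarrow> eta X x \<in> R X"
    and bind_in: "(\<And>x. x \<in> X \<Longrightarrow> f x \<in> R Y) \<Longrightarrow> t \<in> R X \<Longrightarrow> bind X Y f t \<in> R Y"
    and bind_cong: "(\<And>x. x \<in> X \<Longrightarrow> f x = g x) \<Longrightarrow> t \<in> R X \<Longrightarrow> bind X Y f t = bind X Y g t"
    and bind_eta: "t \<in> R X \<Longrightarrow> bind X X (eta X) t = t"
    and bind_eta_left: "(\<And>x. x \<in> X \<Longrightarrow> f x \<in> R Y) \<Longrightarrow> x \<in> X \<Longrightarrow> bind X Y f (eta X x) = f x"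
    and bind_bind: "(\<And>x. x \<in> X \<Longrightarrow> f x \<in> R Y) \<Longrightarrow> (\<And>y. y \<in> Y \<Longrightarrow> g y \<in> R Z) \<Longrightarrow> t \<in> R X \<Longrightarrow>
      bind Y Z g (bind X Y f t) = bind X Z (\<lambda>x. bind Y Z g (f x)) t"

lemma set_monad_if_monad_sets:
  assumes "monad_sets R eta bind"
  shows "set_monad R eta bind"
  using assms unfolding monad_sets_def by unfold_locales (elim conjE; metis)+

text \<open>Only the action rho of a left module enters the construction, not its functor part.\<close>

locale set_monad_module = set_monad R eta bind
  for R :: "nat set \<Rightarrow> 'r set" and eta :: "nat set \<Rightarrow> nat \<Rightarrow> 'r"
    and bind :: "nat set \<Rightarrow> nat set \<Rightarrow> (nat \<Rightarrow> 'r) \<Rightarrow> 'r \<Rightarrow> 'r" +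
  fixes LM :: "nat set \<Rightarrow> 'm set" and rho :: "nat set \<Rightarrow> nat set \<Rightarrow> (nat \<Rightarrow> 'r) \<Rightarrow> 'm \<Rightarrow> 'm"
  assumes rho_in: "(\<And>x. x \<in> X \<Longrightarrow> f x \<in> R Y) \<Longrightarrow> a \<in> LM X \<Longrightarrow> rho X Y f a \<in> LM Y"
    and rho_cong: "(\<And>x. x \<in> X \<Longrightarrow> f x = g x) \<Longrightarrow> a \<in> LM X \<Longrightarrow> rho X Y f a = rho X Y g a"
    and rho_eta: "a \<in> LM X \<Longrightarrow> rho X X (eta X) a = a"
    and rho_rho: "(\<And>x. x \<in> X \<Longrightarrow> f x \<in> R Y) \<Longrightarrow> (\<And>y. y \<in> Y \<Longrightarrow> g y \<in> R Z) \<Longrightarrow> a \<in> LM X \<Longrightarrow>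
      rho Y Z g (rho X Y f a) = rho X Z (\<lambda>x. bind Y Z g (f x)) a"

lemma set_monad_module_if_left_module_sets:
  assumes "monad_sets R eta bind" and "left_module_sets R eta bind LM lmap rho"
  shows "set_monad_module R eta bind LM rho"
proof -
  interpret set_monad R eta bind using assms(1) by (rule set_monad_if_monad_sets)
  show ?thesis
    using assms(2) unfolding left_module_sets_def by unfold_locales (elim conjE; metis)+
qed

lemma subst_fun_in: "\<forall>f\<in>set fs. f \<in> A \<Longrightarrow> i \<in> {1..length fs} \<Longrightarrow> subst_fun fs i \<in> A"
  unfolding subst_fun_def by auto

lemma subst_fun_map: "i \<in> {1..length fs} \<Longrightarrow> subst_fun (map F fs) i = F (subst_fun fs i)"
  unfolding subst_fun_def by auto

lemma subst_fun_butlast: "i \<in> {1..length fs - 1} \<Longrightarrow> subst_fun (butlast fs) i = subst_fun fs i"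
  unfolding subst_fun_def by (auto simp: nth_butlast)

lemma subst_fun_last: "fs \<noteq> [] \<Longrightarrow> subst_fun fs (length fs) = last fs"
  unfolding subst_fun_def by (simp add: last_conv_nth)

lemma map_subst_fun_upt: "n \<le> Suc (length fs) \<Longrightarrow> map (subst_fun fs) [1..<n] = take (n - 1) fs"
  by (rule nth_equalityI) (auto simp: subst_fun_def simp del: upt_Suc)

lemma mem_CC_Hom: "h \<in> CC_Hom R LM X Y \<longleftrightarrow> X \<in> CC_Ob LM \<and> Y \<in> CC_Ob LM \<and>
   (\<exists>fs. h = (X, Y, fs) \<and> length fs = length Y \<and> (\<forall>f\<in>set fs. f \<in> R {1..length X}))"
  unfolding CC_Hom_def by auto

lemma CC_HomE:
  assumes "h \<in> CC_Hom R LM X Y"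
  obtains fs where "h = (X, Y, fs)" "length fs = length Y" "\<forall>f\<in>set fs. f \<in> R {1..length X}"
    and "X \<in> CC_Ob LM" "Y \<in> CC_Ob LM"
  using assms unfolding mem_CC_Hom by blast

lemma CC_Hom_disjoint: "CC_Hom R LM X Y \<inter> CC_Hom R LM X' Y' \<noteq> {} \<Longrightarrow> X = X' \<and> Y = Y'"
  by (auto simp: mem_CC_Hom)

lemma CC_comp_apply [simp]:
  "CC_comp bind (Y', Z, gs) (X, Y, fs) = (X, Z, map (bind {1..length Y} {1..length X} (subst_fun fs)) gs)"
  by (simp add: CC_comp_def)

lemma CC_star_apply [simp]:
  "CC_star rho (Y, C, fs) X = Y @ [rho {1..length C} {1..length Y} (subst_fun fs) (last X)]"
  by (simp add: CC_star_def)

lemma CC_q_apply [simp]: "CC_q eta bind rho (Y, C, fs) X = (CC_star rho (Y, C, fs) X, X,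
    map (bind {1..length Y} {1..Suc (length Y)} (eta {1..Suc (length Y)})) fs
      @ [eta {1..Suc (length Y)} (Suc (length Y))])"
  by (simp add: CC_q_def)

lemma CC_Ob_Nil: "[] \<in> CC_Ob LM"
  by (simp add: CC_Ob_def)

lemma CC_Ob_snoc: "Y \<in> CC_Ob LM \<Longrightarrow> a \<in> LM {1..length Y} \<Longrightarrow> Y @ [a] \<in> CC_Ob LM"
  unfolding CC_Ob_def by (auto simp: nth_append less_Suc_eq)

lemma CC_Ob_butlast: "X \<in> CC_Ob LM \<Longrightarrow> butlast X \<in> CC_Ob LM"
  unfolding CC_Ob_def by (auto simp: nth_butlast)

lemma CC_Ob_last: "X \<in> CC_Ob LM \<Longrightarrow> X \<noteq> [] \<Longrightarrow> last X \<in> LM {1..length X - 1}"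
  unfolding CC_Ob_def by (auto simp: last_conv_nth)

lemma CC_ft_in_Ob: "X \<in> CC_Ob LM \<Longrightarrow> CC_ft X \<in> CC_Ob LM"
  unfolding CC_ft_def by (rule CC_Ob_butlast)

lemma length_CC_ft: "length (CC_ft X) = length X - 1"
  by (simp add: CC_ft_def)

lemma CC_ft_Nil: "CC_ft [] = []"
  by (simp add: CC_ft_def)

lemma length_CC_star: "f \<in> CC_Hom R LM Y C \<Longrightarrow> length (CC_star rho f X) = Suc (length Y)"
  by (auto elim: CC_HomE)

lemma CC_ft_CC_star: "f \<in> CC_Hom R LM Y C \<Longrightarrow> CC_ft (CC_star rho f X) = Y"
  by (auto simp: CC_ft_def elim: CC_HomE)

lemma CC_Hom_Nil_unique: "X \<in> CC_Ob LM \<Longrightarrow> \<exists>!f. f \<in> CC_Hom R LM X []"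
  unfolding mem_CC_Hom using CC_Ob_Nil by auto

context set_monad
begin

lemma map_bind_eta:
  "set xs \<subseteq> X \<Longrightarrow> (\<And>x. x \<in> X \<Longrightarrow> f x \<in> R Y) \<Longrightarrow> map (bind X Y f) (map (eta X) xs) = map f xs"
  by (auto intro: bind_eta_left)

lemma bind_weaken:
  assumes "X \<subseteq> Y" and "\<And>y. y \<in> Y \<Longrightarrow> g y \<in> R Z" and "t \<in> R X"
  shows "bind Y Z g (bind X Y (eta Y) t) = bind X Z g t"
proof -
  have "bind Y Z g (bind X Y (eta Y) t) = bind X Z (\<lambda>x. bind Y Z g (eta Y x)) t"
    using assms by (intro bind_bind) (auto intro: eta_in)
  also have "\<dots> = bind X Z g t"
    using assms by (intro bind_cong) (auto intro: bind_eta_left)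
  finally show ?thesis .
qed

lemma CC_id_in: "X \<in> CC_Ob LM \<Longrightarrow> CC_id eta X \<in> CC_Hom R LM X X"
  unfolding mem_CC_Hom CC_id_def by (auto intro: eta_in simp del: upt_Suc)

lemma CC_comp_in:
  assumes "f \<in> CC_Hom R LM X Y" and "g \<in> CC_Hom R LM Y Z"
  shows "CC_comp bind g f \<in> CC_Hom R LM X Z"
  using assms
  by (elim CC_HomE) (auto simp: mem_CC_Hom intro!: bind_in subst_fun_in)

lemma CC_comp_id_right: "f \<in> CC_Hom R LM X Y \<Longrightarrow> CC_comp bind f (CC_id eta X) = f"
proof (elim CC_HomE)
  fix fs assume f: "f = (X, Y, fs)" and fs: "\<forall>a\<in>set fs. a \<in> R {1..length X}"
  let ?X = "{1..length X}"
  have "bind ?X ?X (subst_fun (map (eta ?X) [1..<Suc (length X)])) a = a" if "a \<in> set fs" for a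
  proof -
    have "bind ?X ?X (subst_fun (map (eta ?X) [1..<Suc (length X)])) a = bind ?X ?X (eta ?X) a"
      using that fs by (intro bind_cong) (auto simp: subst_fun_def simp del: upt_Suc)
    also have "\<dots> = a" using that fs by (simp add: bind_eta)
    finally show ?thesis .
  qed
  then show ?thesis unfolding f CC_id_def by (simp add: map_idI del: upt_Suc)
qed

lemma CC_comp_id_left: "f \<in> CC_Hom R LM X Y \<Longrightarrow> CC_comp bind (CC_id eta Y) f = f"
proof (elim CC_HomE)
  fix fs assume f: "f = (X, Y, fs)" and fs: "length fs = length Y" "\<forall>a\<in>set fs. a \<in> R {1..length X}"
  have "map (bind {1..length Y} {1..length X} (subst_fun fs)) (map (eta {1..length Y}) [1..<length Y + 1])
      = map (subst_fun fs) [1..<length Y + 1]"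
    using fs by (intro map_bind_eta) (auto intro: subst_fun_in simp del: upt_Suc)
  also have "\<dots> = fs"
    using fs by (subst map_subst_fun_upt) auto
  finally show ?thesis unfolding f CC_id_def CC_comp_apply by (simp only:)
qed

lemma CC_comp_assoc:
  assumes "f \<in> CC_Hom R LM W X" and "g \<in> CC_Hom R LM X Y" and "h \<in> CC_Hom R LM Y Z"
  shows "CC_comp bind h (CC_comp bind g f) = CC_comp bind (CC_comp bind h g) f"
  using assms
proof (elim CC_HomE)
  fix fs gs hs
  assume f: "f = (W, X, fs)" "length fs = length X" "\<forall>a\<in>set fs. a \<in> R {1..length W}"
    and g: "g = (X, Y, gs)" "length gs = length Y" "\<forall>a\<in>set gs. a \<in> R {1..length X}"
    and h: "h = (Y, Z, hs)" "\<forall>a\<in>set hs. a \<in> R {1..length Y}"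
  let ?F = "bind {1..length X} {1..length W} (subst_fun fs)"
  have "bind {1..length Y} {1..length W} (subst_fun (map ?F gs)) a
      = ?F (bind {1..length Y} {1..length X} (subst_fun gs) a)" if "a \<in> set hs" for a
  proof -
    have "?F (bind {1..length Y} {1..length X} (subst_fun gs) a)
        = bind {1..length Y} {1..length W} (\<lambda>y. ?F (subst_fun gs y)) a"
      using that f g h by (intro bind_bind) (auto intro!: subst_fun_in)
    also have "\<dots> = bind {1..length Y} {1..length W} (subst_fun (map ?F gs)) a"
      using that g h by (intro bind_cong) (auto simp: subst_fun_map)
    finally show ?thesis by simp
  qed
  then show ?thesis unfolding f g h by simp
qed

lemma is_category_CC: "is_category (CC_Ob LM) (CC_Hom R LM) (CC_comp bind) (CC_id eta)"
  unfolding is_category_def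
  by (intro conjI ballI impI CC_Hom_disjoint CC_id_in CC_comp_in CC_comp_id_right
      CC_comp_id_left CC_comp_assoc) auto

lemma CC_p_in: "X \<in> CC_Ob LM \<Longrightarrow> CC_p eta X \<in> CC_Hom R LM X (CC_ft X)"
  unfolding CC_p_def CC_ft_def mem_CC_Hom by (auto intro: CC_Ob_butlast eta_in)

lemma CC_comp_p:
  assumes "(W, Z, ws) \<in> CC_Hom R LM W Z"
  shows "CC_comp bind (CC_p eta Z) (W, Z, ws) = (W, butlast Z, butlast ws)"
proof -
  from assms have ws: "length ws = length Z" "\<forall>a\<in>set ws. a \<in> R {1..length W}"
    unfolding mem_CC_Hom by auto
  then have "map (bind {1..length Z} {1..length W} (subst_fun ws)) (map (eta {1..length Z}) [1..<length Z])
      = map (subst_fun ws) [1..<length Z]"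
    by (intro map_bind_eta) (auto intro: subst_fun_in simp del: upt_Suc)
  also have "\<dots> = butlast ws"
    using ws by (subst map_subst_fun_upt) (auto simp: butlast_conv_take)
  finally show ?thesis unfolding CC_p_def CC_comp_apply by (simp only:)
qed

lemma CC_comp_q:
  assumes f: "(Y, C, fs) \<in> CC_Hom R LM Y C" and w: "(W, Z, ws) \<in> CC_Hom R LM W Z"
    and Z: "Z = CC_star rho (Y, C, fs) X"
  shows "CC_comp bind (CC_q eta bind rho (Y, C, fs) X) (W, Z, ws)
     = (W, X, map (bind {1..length Y} {1..length W} (subst_fun (butlast ws))) fs @ [last ws])"
proof -
  from f have fs: "\<forall>a\<in>set fs. a \<in> R {1..length Y}" unfolding mem_CC_Hom by auto
  from w Z have ws: "length ws = Suc (length Y)" "\<forall>a\<in>set ws. a \<in> R {1..length W}"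
    unfolding mem_CC_Hom by auto
  let ?S = "bind {1..Suc (length Y)} {1..length W} (subst_fun ws)"
  have S_in: "subst_fun ws x \<in> R {1..length W}" if "x \<in> {1..Suc (length Y)}" for x
    using that ws by (auto intro!: subst_fun_in)
  have "?S (bind {1..length Y} {1..Suc (length Y)} (eta {1..Suc (length Y)}) a)
      = bind {1..length Y} {1..length W} (subst_fun (butlast ws)) a" if "a \<in> set fs" for a
  proof -
    have "?S (bind {1..length Y} {1..Suc (length Y)} (eta {1..Suc (length Y)}) a)
        = bind {1..length Y} {1..length W} (subst_fun ws) a"
      using that fs S_in by (intro bind_weaken) auto
    also have "\<dots> = bind {1..length Y} {1..length W} (subst_fun (butlast ws)) a"
      using that fs ws by (intro bind_cong) (auto simp: subst_fun_butlast)
    finally show ?thesis .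
  qed
  moreover have "?S (eta {1..Suc (length Y)} (Suc (length Y))) = subst_fun ws (length ws)"
    using S_in ws by (subst bind_eta_left) auto
  moreover have "subst_fun ws (length ws) = last ws"
    using ws by (intro subst_fun_last) auto
  ultimately show ?thesis using Z by simp
qed

end

context set_monad_module
begin

lemma CC_star_in_Ob:
  assumes X: "X \<in> CC_Ob LM" "X \<noteq> []" and f: "f \<in> CC_Hom R LM Y (CC_ft X)"
  shows "CC_star rho f X \<in> CC_Ob LM"
proof -
  obtain fs where f': "f = (Y, butlast X, fs)" "length fs = length X - 1"
    "\<forall>a\<in>set fs. a \<in> R {1..length Y}" and "Y \<in> CC_Ob LM"
    using f unfolding CC_ft_def by (auto elim: CC_HomE)
  moreover have "rho {1..length X - 1} {1..length Y} (subst_fun fs) (last X) \<in> LM {1..length Y}"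
    using f' CC_Ob_last[OF X] by (intro rho_in) (auto intro!: subst_fun_in)
  ultimately show ?thesis by (simp add: CC_Ob_snoc)
qed

lemma CC_q_in:
  assumes X: "X \<in> CC_Ob LM" "X \<noteq> []" and f: "f \<in> CC_Hom R LM Y (CC_ft X)"
  shows "CC_q eta bind rho f X \<in> CC_Hom R LM (CC_star rho f X) X"
proof -
  obtain fs where f': "f = (Y, butlast X, fs)" "length fs = length X - 1"
    "\<forall>a\<in>set fs. a \<in> R {1..length Y}"
    using f unfolding CC_ft_def by (auto elim: CC_HomE)
  have "bind {1..length Y} {1..Suc (length Y)} (eta {1..Suc (length Y)}) a \<in> R {1..Suc (length Y)}"
    if "a \<in> set fs" for a
    using that f' by (intro bind_in) (auto intro: eta_in)
  then show ?thesis
    using CC_star_in_Ob[OF assms] length_CC_star[OF f, of rho X] X f'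
    unfolding mem_CC_Hom by (auto intro: eta_in)
qed

lemma CC_p_q_square:
  assumes X: "X \<in> CC_Ob LM" "X \<noteq> []" and f: "f \<in> CC_Hom R LM Y (CC_ft X)"
  shows "CC_comp bind (CC_p eta X) (CC_q eta bind rho f X) = CC_comp bind f (CC_p eta (CC_star rho f X))"
proof -
  obtain fs where f': "f = (Y, butlast X, fs)" "\<forall>a\<in>set fs. a \<in> R {1..length Y}"
    using f unfolding CC_ft_def by (auto elim: CC_HomE)
  let ?Y' = "{1..Suc (length Y)}"
  have "CC_comp bind (CC_p eta X) (CC_q eta bind rho f X)
      = (CC_star rho f X, butlast X, map (bind {1..length Y} ?Y' (eta ?Y')) fs)"
    using CC_q_in[OF assms] unfolding f' by (simp add: CC_comp_p)
  also have "\<dots> = CC_comp bind f (CC_p eta (CC_star rho f X))"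
  proof -
    have "bind {1..length Y} ?Y' (subst_fun (map (eta ?Y') [1..<Suc (length Y)])) a
        = bind {1..length Y} ?Y' (eta ?Y') a" if "a \<in> set fs" for a
      using that f' by (intro bind_cong) (auto simp: subst_fun_def simp del: upt_Suc)
    then show ?thesis unfolding CC_p_def f' by (simp del: upt_Suc)
  qed
  finally show ?thesis .
qed

lemma CC_pullback:
  assumes X: "X \<in> CC_Ob LM" "X \<noteq> []" and f: "f \<in> CC_Hom R LM Y (CC_ft X)"
  shows "is_pullback (CC_Ob LM) (CC_Hom R LM) (CC_comp bind) (CC_star rho f X) X Y (CC_ft X)
          (CC_q eta bind rho f X) (CC_p eta (CC_star rho f X)) (CC_p eta X) f"
  unfolding is_pullback_def
proof (intro ballI impI)
  fix W u v assume u: "u \<in> CC_Hom R LM W Y" and v: "v \<in> CC_Hom R LM W X"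
    and uv: "CC_comp bind f u = CC_comp bind (CC_p eta X) v"
  obtain fs where f': "f = (Y, butlast X, fs)"
    using f unfolding CC_ft_def by (auto elim: CC_HomE)
  have f_hom: "(Y, butlast X, fs) \<in> CC_Hom R LM Y (butlast X)"
    using f f' by (simp add: CC_ft_def)
  obtain us where u': "u = (W, Y, us)" and us: "length us = length Y"
    "\<forall>a\<in>set us. a \<in> R {1..length W}" and W: "W \<in> CC_Ob LM"
    using u by (auto elim: CC_HomE)
  obtain vs where v': "v = (W, X, vs)" "length vs = length X" "\<forall>a\<in>set vs. a \<in> R {1..length W}"
    using v by (auto elim: CC_HomE)
  have "vs \<noteq> []" using v' X by auto
  have f_us: "map (bind {1..length Y} {1..length W} (subst_fun us)) fs = butlast vs"
    using uv CC_comp_p[of W X vs] v unfolding f' u' v' by simp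
  let ?P = "CC_star rho f X"
  have P: "?P \<in> CC_Ob LM" "length ?P = Suc (length Y)" "CC_ft ?P = Y"
    using CC_star_in_Ob[OF assms] length_CC_star[OF f, of rho X] CC_ft_CC_star[OF f, of rho X] by auto
  have p_w: "CC_comp bind (CC_p eta ?P) (W, ?P, ws) = (W, Y, butlast ws)"
    if "(W, ?P, ws) \<in> CC_Hom R LM W ?P" for ws
    using CC_comp_p[OF that] P(3) by (simp add: CC_ft_def)
  have q_w: "CC_comp bind (CC_q eta bind rho f X) (W, ?P, ws)
      = (W, X, map (bind {1..length Y} {1..length W} (subst_fun (butlast ws))) fs @ [last ws])"
    if "(W, ?P, ws) \<in> CC_Hom R LM W ?P" for ws
    using CC_comp_q[OF f_hom that] unfolding f' by simp
  let ?w = "(W, ?P, us @ [last vs])"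
  show "\<exists>!w. w \<in> CC_Hom R LM W ?P \<and> CC_comp bind (CC_p eta ?P) w = u
          \<and> CC_comp bind (CC_q eta bind rho f X) w = v"
  proof (rule ex1I[of _ ?w])
    have "?w \<in> CC_Hom R LM W ?P"
      using P(1,2) W us v' \<open>vs \<noteq> []\<close> unfolding mem_CC_Hom by auto
    then show "?w \<in> CC_Hom R LM W ?P \<and> CC_comp bind (CC_p eta ?P) ?w = u
        \<and> CC_comp bind (CC_q eta bind rho f X) ?w = v"
      using p_w q_w f_us \<open>vs \<noteq> []\<close> unfolding u' v' by simp
  next
    fix w assume w: "w \<in> CC_Hom R LM W ?P \<and> CC_comp bind (CC_p eta ?P) w = u
        \<and> CC_comp bind (CC_q eta bind rho f X) w = v"
    then obtain ws where ws: "w = (W, ?P, ws)" "length ws = Suc (length Y)"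
      using P(2) by (auto elim!: CC_HomE)
    have "butlast ws = us" and "last ws = last vs"
      using w p_w q_w unfolding ws u' v' by auto
    then show "w = ?w" using ws by (metis append_butlast_last_id list.size(3) nat.distinct(1))
  qed
qed

lemma CC_star_id:
  assumes X: "X \<in> CC_Ob LM" "X \<noteq> []"
  shows "CC_star rho (CC_id eta (CC_ft X)) X = X"
proof -
  obtain n where n: "length X = Suc n" using X by (cases X) auto
  let ?N = "{1..n}"
  have "rho ?N ?N (subst_fun (map (eta ?N) [1..<Suc n])) (last X) = rho ?N ?N (eta ?N) (last X)"
    using CC_Ob_last[OF X] n by (intro rho_cong) (auto simp: subst_fun_def simp del: upt_Suc)
  also have "\<dots> = last X" using CC_Ob_last[OF X] n by (simp add: rho_eta)
  finally show ?thesis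
    using X n unfolding CC_id_def CC_ft_def by (simp del: upt_Suc)
qed

lemma CC_q_id:
  assumes X: "X \<in> CC_Ob LM" "X \<noteq> []"
  shows "CC_q eta bind rho (CC_id eta (CC_ft X)) X = CC_id eta X"
proof -
  obtain n where n: "length X = Suc n" using X by (cases X) auto
  have "map (bind {1..n} {1..Suc n} (eta {1..Suc n})) (map (eta {1..n}) [1..<Suc n])
      = map (eta {1..Suc n}) [1..<Suc n]"
    by (intro map_bind_eta) (auto intro: eta_in simp del: upt_Suc)
  then show ?thesis
    using CC_star_id[OF X] n unfolding CC_id_def CC_ft_def
    by (simp add: upt_Suc_append del: upt_Suc map_map)
qed

lemma CC_star_comp:
  assumes X: "X \<in> CC_Ob LM" "X \<noteq> []" and f: "f \<in> CC_Hom R LM Y (CC_ft X)"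
    and g: "g \<in> CC_Hom R LM Z Y"
  shows "CC_star rho (CC_comp bind f g) X = CC_star rho g (CC_star rho f X)"
proof -
  obtain fs where f': "f = (Y, butlast X, fs)" "length fs = length X - 1"
    "\<forall>a\<in>set fs. a \<in> R {1..length Y}"
    using f unfolding CC_ft_def by (auto elim: CC_HomE)
  obtain gs where g': "g = (Z, Y, gs)" "\<forall>a\<in>set gs. a \<in> R {1..length Z}"
    using g by (auto elim: CC_HomE)
  let ?G = "bind {1..length Y} {1..length Z} (subst_fun gs)"
  have "rho {1..length Y} {1..length Z} (subst_fun gs)
        (rho {1..length X - 1} {1..length Y} (subst_fun fs) (last X))
      = rho {1..length X - 1} {1..length Z} (\<lambda>x. ?G (subst_fun fs x)) (last X)"
    using f' g g' CC_Ob_last[OF X] by (intro rho_rho) (auto intro!: subst_fun_in elim: CC_HomE)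
  also have "\<dots> = rho {1..length X - 1} {1..length Z} (subst_fun (map ?G fs)) (last X)"
    using f' CC_Ob_last[OF X] by (intro rho_cong) (auto simp: subst_fun_map)
  finally show ?thesis unfolding f' g' by simp
qed

lemma CC_q_comp:
  assumes X: "X \<in> CC_Ob LM" "X \<noteq> []" and f: "f \<in> CC_Hom R LM Y (CC_ft X)"
    and g: "g \<in> CC_Hom R LM Z Y"
  shows "CC_q eta bind rho (CC_comp bind f g) X
    = CC_comp bind (CC_q eta bind rho f X) (CC_q eta bind rho g (CC_star rho f X))"
proof -
  obtain fs where f': "f = (Y, butlast X, fs)" "\<forall>a\<in>set fs. a \<in> R {1..length Y}"
    using f unfolding CC_ft_def by (auto elim: CC_HomE)
  obtain gs where g': "g = (Z, Y, gs)" "length gs = length Y" "\<forall>a\<in>set gs. a \<in> R {1..length Z}"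
    using g by (auto elim: CC_HomE)
  let ?G = "bind {1..length Y} {1..length Z} (subst_fun gs)"
    and ?I = "bind {1..length Z} {1..Suc (length Z)} (eta {1..Suc (length Z)})"
  let ?qgs = "map ?I gs @ [eta {1..Suc (length Z)} (Suc (length Z))]"
  have fX: "CC_star rho f X \<in> CC_Ob LM" "CC_star rho f X \<noteq> []"
    and g_hom: "g \<in> CC_Hom R LM Z (CC_ft (CC_star rho f X))"
    using g CC_star_in_Ob[OF X f] length_CC_star[OF f, of rho X] CC_ft_CC_star[OF f, of rho X]
    by auto
  have q_g: "CC_q eta bind rho g (CC_star rho f X)
      = (CC_star rho g (CC_star rho f X), CC_star rho f X, ?qgs)"
    unfolding g'(1) by simp
  have "CC_comp bind (CC_q eta bind rho f X) (CC_q eta bind rho g (CC_star rho f X))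
      = CC_comp bind (CC_q eta bind rho (Y, butlast X, fs) X)
          (CC_star rho g (CC_star rho f X), CC_star rho f X, ?qgs)"
    by (subst q_g) (simp only: f'(1))
  also have "\<dots> = (CC_star rho g (CC_star rho f X), X,
      map (bind {1..length Y} {1..length (CC_star rho g (CC_star rho f X))}
        (subst_fun (butlast ?qgs))) fs @ [last ?qgs])"
    using f f' CC_q_in[OF fX g_hom] unfolding q_g
    by (intro CC_comp_q) (simp_all add: CC_ft_def)
  also have "\<dots> = (CC_star rho g (CC_star rho f X), X,
      map (bind {1..length Y} {1..Suc (length Z)} (subst_fun (map ?I gs))) fs
        @ [eta {1..Suc (length Z)} (Suc (length Z))])"
    using length_CC_star[OF g_hom, of rho "CC_star rho f X"] by simp
  also have "\<dots> = CC_q eta bind rho (CC_comp bind f g) X"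
  proof -
    have "bind {1..length Y} {1..Suc (length Z)} (subst_fun (map ?I gs)) a = ?I (?G a)"
      if "a \<in> set fs" for a
    proof -
      have "?I (?G a) = bind {1..length Y} {1..Suc (length Z)} (\<lambda>y. ?I (subst_fun gs y)) a"
        using that f' g' by (intro bind_bind) (auto intro: eta_in intro!: subst_fun_in)
      also have "\<dots> = bind {1..length Y} {1..Suc (length Z)} (subst_fun (map ?I gs)) a"
        using that f' g' by (intro bind_cong) (auto simp: subst_fun_map)
      finally show ?thesis by simp
    qed
    then show ?thesis using CC_star_comp[OF X f g] unfolding f' g' by simp
  qed
  finally show ?thesis by simp
qed

theorem C_system_CC:
  "C_system (CC_Ob LM) (CC_Hom R LM) (CC_comp bind) (CC_id eta) length []
     CC_ft (CC_p eta) (CC_star rho) (CC_q eta bind rho)"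
  unfolding C_system_def
  by (intro conjI ballI impI is_category_CC CC_p_in CC_Hom_Nil_unique CC_Ob_Nil)
    (auto simp: CC_ft_in_Ob length_CC_ft CC_ft_Nil CC_star_in_Ob length_CC_star CC_ft_CC_star CC_q_in CC_p_q_square
      CC_pullback CC_star_id CC_q_id CC_star_comp CC_q_comp)

end

theorem proposition3p1:
  fixes R :: "nat set \<Rightarrow> 'r set" and eta :: "nat set \<Rightarrow> nat \<Rightarrow> 'r"
    and bind :: "nat set \<Rightarrow> nat set \<Rightarrow> (nat \<Rightarrow> 'r) \<Rightarrow> 'r \<Rightarrow> 'r"
    and LM :: "nat set \<Rightarrow> 'm set" and lmap :: "nat set \<Rightarrow> nat set \<Rightarrow> (nat \<Rightarrow> nat) \<Rightarrow> 'm \<Rightarrow> 'm"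
    and rho :: "nat set \<Rightarrow> nat set \<Rightarrow> (nat \<Rightarrow> 'r) \<Rightarrow> 'm \<Rightarrow> 'm"
  assumes "monad_sets R eta bind"
    and "left_module_sets R eta bind LM lmap rho"
  shows "C_system (CC_Ob LM) (CC_Hom R LM) (CC_comp bind) (CC_id eta) length []
           CC_ft (CC_p eta) (CC_star rho) (CC_q eta bind rho)"
proof -
  interpret set_monad_module R eta bind LM rho
    using assms by (rule set_monad_module_if_left_module_sets)
  show ?thesis by (rule C_system_CC)
qed

end
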